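(* Let $n\geqslant 2$ and $c\geqslant 1$ be integers and let $\Gamma$ be an abelian group of order $2nc$. A diagonal $\mathrm{MRS}_\Gamma(n;2;c)$ exists if and only if $\Gamma$ contains an element of order $n$.
   Context: For positive integers $m,n,s,k,c$ and an abelian group $\Gamma$ of order $nkc$, an $\mathrm{MRS}_\Gamma(m,n;s,k;c)$ is a set of $c$ partially filled $m\times n$ arrays (some cells may be empty) with entries in $\Gamma$ such that: every element of $\Gamma$ appears exactly once and in a unique array; in every array each row contains exactly $s$ filled cells and each column contains exactly $k$ filled cells; and there exist $\omega,\delta\in\Gamma$ such that in every array each row sum is $\omega$ and each column sum is $\delta$. $\mathrm{MRS}_\Gamma(n;k;c)$ denotes $\mathrm{MRS}_\Gamma(n,n;k,k;c)$. In an $n\times n$ array, for $0\leqslant \ell\leqslant n-1$ the diagonal $D_\ell$ is the set of cells $(i,j)$ with $j-i\equiv \ell\pmod n$. An $\mathrm{MRS}_\Gamma(n;k;c)$ is diagonal if, in each of its arrays, the filled cells are exactly the cells of $k$ consecutive diagonals $D_{t},D_{t+1},\ldots,D_{t+k-1}$ (indices modulo $n$). *)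

theory Defs
  imports "HOL-Algebra.Algebra"
begin

text \<open>A family of c partially filled m x n arrays with entries in the group G:
  A t i j = Some g means cell (i,j) of array t (t < c, i < m, j < n) holds g;
  None means the cell is empty. The group is written multiplicatively in
  HOL-Algebra, so sums are finprod.\<close>

type_synonym 'a arrays = "nat \<Rightarrow> nat \<Rightarrow> nat \<Rightarrow> 'a option"

definition filled_cells :: "nat \<Rightarrow> nat \<Rightarrow> nat \<Rightarrow> 'a arrays \<Rightarrow> (nat \<times> nat \<times> nat) set" where
  "filled_cells m n c A = {(t,i,j). t < c \<and> i < m \<and> j < n \<and> A t i j \<noteq> None}"

definition MRS :: "('a, 'b) monoid_scheme \<Rightarrow> nat \<Rightarrow> nat \<Rightarrow> nat \<Rightarrow> nat \<Rightarrow> nat \<Rightarrow> 'a arrays \<Rightarrow> bool" where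
  "MRS G m n s k c A \<longleftrightarrow>
     card (carrier G) = n * k * c \<and>
     bij_betw (\<lambda>(t,i,j). the (A t i j)) (filled_cells m n c A) (carrier G) \<and>
     (\<forall>t<c. \<forall>i<m. card {j. j < n \<and> A t i j \<noteq> None} = s) \<and>
     (\<forall>t<c. \<forall>j<n. card {i. i < m \<and> A t i j \<noteq> None} = k) \<and>
     (\<exists>\<omega>\<in>carrier G. \<exists>\<delta>\<in>carrier G.
        (\<forall>t<c. \<forall>i<m. finprod G (\<lambda>j. the (A t i j)) {j. j < n \<and> A t i j \<noteq> None} = \<omega>) \<and>
        (\<forall>t<c. \<forall>j<n. finprod G (\<lambda>i. the (A t i j)) {i. i < m \<and> A t i j \<noteq> None} = \<delta>))"

definition in_diag :: "nat \<Rightarrow> nat \<Rightarrow> nat \<Rightarrow> nat \<Rightarrow> bool" where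
  "in_diag n l i j \<longleftrightarrow> (int j - int i) mod int n = int l mod int n"

definition diagonal_MRS :: "('a, 'b) monoid_scheme \<Rightarrow> nat \<Rightarrow> nat \<Rightarrow> nat \<Rightarrow> 'a arrays \<Rightarrow> bool" where
  "diagonal_MRS G n k c A \<longleftrightarrow>
     MRS G n n k k c A \<and>
     (\<forall>t<c. \<exists>d<n. \<forall>i<n. \<forall>j<n.
        (A t i j \<noteq> None \<longleftrightarrow> (\<exists>r<k. in_diag n (d + r) i j)))"

end

theory Submission
  imports Defs
begin

text \<open>
  Necessity: in one array of a diagonal MRS on the diagonals D_d and D_(d+1), let a i and b i
  be the two entries of row i. The row and column sums give a i \<otimes> b i = \<omega> and
  b i \<otimes> a (i + 1) = \<delta> (indices mod n), hence a (i + 1) = a i \<otimes> g with g = inv \<omega> \<otimes> \<delta>.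
  As the a i are distinct and a n = a 0, g has order exactly n.

  Sufficiency: let x have order n and H = \<langle>x\<rangle>, a subgroup of index 2c. The quotient G/H has
  even order, so some coset W is not a square and Y \<mapsto> W Y\<inverse> is a fixed-point-free involution
  of G/H. Choose representatives r t of one coset in each of its c orbits, and w \<in> W. Array t
  holds r t \<otimes> x^i on D_0 and w \<otimes> inv (r t \<otimes> x^i) on D_1 in row i: all row sums are w, all
  column sums are w \<otimes> x, and the entries run through the 2c cosets H r t and H w (r t)\<inverse>
  exactly once.
\<close>

lemma in_diag_add_mod: "in_diag n r i ((i + r) mod n)"
  unfolding in_diag_def by (simp add: zmod_int mod_diff_left_eq)

lemma in_diag_iff:
  assumes "j < n"
  shows "in_diag n r i j \<longleftrightarrow> j = (i + r) mod n"
proof -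
  have "in_diag n r i j \<longleftrightarrow> int n dvd (int j - (int i + int r))"
    unfolding in_diag_def by (simp add: mod_eq_dvd_iff algebra_simps)
  also have "\<dots> \<longleftrightarrow> int j mod int n = (int i + int r) mod int n"
    by (simp add: mod_eq_dvd_iff)
  also have "\<dots> \<longleftrightarrow> j = (i + r) mod n"
    using assms by (simp flip: zmod_int of_nat_add)
  finally show ?thesis .
qed

lemma Suc_mod_neq:
  assumes "1 < (n::nat)"
  shows "Suc m mod n \<noteq> m mod n"
  using assms by (simp add: mod_Suc)

lemma Suc_mod_neq_self:
  assumes "1 < n" "i < n"
  shows "Suc i mod n \<noteq> i" "i \<noteq> Suc i mod n"
  using Suc_mod_neq[OF assms(1), of i] assms(2) by simp_all

lemma ex_Suc_mod_eq:
  assumes "j < n"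
  shows "\<exists>i<n. j = Suc i mod n"
proof (cases j)
  case 0
  with assms have "n - 1 < n \<and> j = Suc (n - 1) mod n" by simp
  then show ?thesis by blast
next
  case (Suc i)
  with assms have "i < n \<and> j = Suc i mod n" by simp
  then show ?thesis by blast
qed

lemma doubleton_eq_if_card_2:
  assumes "card S = 2" "a \<in> S" "b \<in> S" "a \<noteq> b"
  shows "S = {a, b}"
  using assms by (auto simp: card_2_iff)

lemma (in comm_monoid) finprod_pair:
  assumes "a \<noteq> b" "f a \<in> carrier G" "f b \<in> carrier G"
  shows "finprod G f {a, b} = f a \<otimes> f b"
  using assms by (simp add: Pi_def)

lemma (in comm_monoid) finprod_card_2:
  assumes "card S = 2" "a \<in> S" "b \<in> S" "a \<noteq> b" "f a \<in> carrier G" "f b \<in> carrier G"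
  shows "finprod G f S = f a \<otimes> f b"
proof -
  have "S = {a, b}" using doubleton_eq_if_card_2 assms(1-4) .
  then show ?thesis using assms(4-6) by (simp add: finprod_pair)
qed

lemma (in group) pow_mod_ord:
  assumes "x \<in> carrier G"
  shows "x [^] (k mod ord x) = x [^] k"
proof -
  have "x [^] k = x [^] (ord x * (k div ord x)) \<otimes> x [^] (k mod ord x)"
    using assms by (simp add: nat_pow_mult)
  also have "x [^] (ord x * (k div ord x)) = \<one>"
    using assms by (simp add: pow_eq_id)
  finally show ?thesis using assms by simp
qed

lemma (in group) ord_eq_if_cyclic_recurrence:
  assumes n: "0 < n" and g: "g \<in> carrier G"
    and a: "\<And>i. i < n \<Longrightarrow> a i \<in> carrier G" "inj_on a {..<n}"
    and step: "\<And>i. i < n \<Longrightarrow> a (Suc i mod n) = a i \<otimes> g"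
  shows "ord g = n"
proof -
  have powers: "a i = a 0 \<otimes> g [^] i" if "i < n" for i
    using that
  proof (induction i)
    case 0
    then show ?case using a(1) by simp
  next
    case (Suc i)
    then have "a (Suc i) = a i \<otimes> g" using step[of i] by simp
    with Suc show ?case using a(1) g by (simp add: m_assoc)
  qed
  have "a 0 \<otimes> g [^] n = a 0 \<otimes> \<one>"
  proof -
    have "a 0 \<otimes> g [^] n = a (n - 1) \<otimes> g"
      using powers[of "n - 1"] n a(1) g by (simp add: m_assoc flip: nat_pow_Suc)
    also have "\<dots> = a 0" using step[of "n - 1"] n by simp
    finally show ?thesis using a(1) n by simp
  qed
  then have "g [^] n = \<one>" using a(1) n g by (metis l_cancel nat_pow_closed one_closed)
  then have "ord g dvd n" using g pow_eq_id by blast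
  then have "0 < ord g" "ord g \<le> n" using n by (auto intro: dvd_imp_le dvd_pos_nat)
  moreover have "g [^] k \<noteq> \<one>" if "0 < k" "k < n" for k
  proof
    assume "g [^] k = \<one>"
    then have "a k = a 0" using powers[OF that(2)] a(1) n by simp
    with a(2) that show False by (auto dest: inj_onD)
  qed
  ultimately show ?thesis using g by (meson le_neq_implies_less pow_ord_eq_1)
qed

lemma bij_betw_if_inj_on_card_eq:
  assumes "inj_on f A" "f ` A \<subseteq> B" "finite B" "card A = card B"
  shows "bij_betw f A B"
  using assms card_image card_subset_eq unfolding bij_betw_def by metis

lemma (in comm_group) r_coset_mult_mem:
  assumes "subgroup H G" "a \<in> carrier G" "h \<in> H"
  shows "H #> (a \<otimes> h) = H #> a"
proof -
  have h: "h \<in> carrier G" using assms(1,3) subgroup.subset by blast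
  have "H #> (a \<otimes> h) = (H #> h) #> a"
    using assms(1,2) h by (simp add: coset_mult_assoc subgroup.subset m_comm)
  then show ?thesis using coset_join2[OF h assms(1,3)] by simp
qed

lemma (in comm_group) mult_mult_inv_cancel:
  assumes "u \<in> carrier G" "w \<in> carrier G" "y \<in> carrier G"
  shows "u \<otimes> (w \<otimes> inv u) = w" and "u \<otimes> y \<otimes> (w \<otimes> inv u) = w \<otimes> y"
proof -
  show "u \<otimes> (w \<otimes> inv u) = w"
    using assms by (simp add: m_lcomm[of u w])
  have "u \<otimes> y \<otimes> (w \<otimes> inv u) = y \<otimes> (u \<otimes> (w \<otimes> inv u))"
    using assms by (simp add: m_comm[of u y] m_assoc)
  then show "u \<otimes> y \<otimes> (w \<otimes> inv u) = w \<otimes> y"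
    using assms \<open>u \<otimes> (w \<otimes> inv u) = w\<close> by (simp add: m_comm)
qed

lemma (in group) ex_nonsquare_if_even_order:
  assumes fin: "finite (carrier G)" and even: "even (order G)"
  shows "\<exists>w\<in>carrier G. \<forall>y\<in>carrier G. y \<otimes> y \<noteq> w"
proof -
  have "order G = 2 ^ 1 * (order G div 2)" using even by simp
  from sylow_thm[OF two_is_prime_nat is_group this fin]
  obtain K where K: "subgroup K G" "card K = 2" by auto
  have one: "\<one> \<in> K" using subgroup.one_closed[OF K(1)] .
  have "\<not> K \<subseteq> {\<one>}"
  proof
    assume "K \<subseteq> {\<one>}"
    then have "card K \<le> 1" using card_mono[of "{\<one>}" K] by simp
    with K(2) show False by simp
  qed
  then obtain z where z: "z \<in> K" "z \<noteq> \<one>" by blast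
  then have K_eq: "K = {\<one>, z}" using doubleton_eq_if_card_2[OF K(2) one] by blast
  have zG: "z \<in> carrier G" using z(1) subgroup.subset[OF K(1)] by blast
  have "z \<otimes> z \<in> K" using subgroup.m_closed[OF K(1) z(1) z(1)] .
  moreover have "z \<otimes> z \<noteq> z" using z(2) zG by (metis l_cancel one_closed r_one)
  ultimately have "z \<otimes> z = \<one> \<otimes> \<one>" using K_eq by simp
  then have "\<not> inj_on (\<lambda>y. y \<otimes> y) (carrier G)"
    using z(2) zG by (meson inj_onD one_closed)
  then obtain w where "w \<in> carrier G" "w \<notin> (\<lambda>y. y \<otimes> y) ` carrier G"
    using finite_surj_inj[OF fin] by blast
  then show ?thesis by force
qed

lemma fixed_point_free_involution_halves:
  assumes fin: "finite A"
    and invol: "\<And>x. x \<in> A \<Longrightarrow> \<tau> x \<in> A" "\<And>x. x \<in> A \<Longrightarrow> \<tau> (\<tau> x) = x"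
    and no_fix: "\<And>x. x \<in> A \<Longrightarrow> \<tau> x \<noteq> x"
  shows "\<exists>R\<subseteq>A. R \<inter> \<tau> ` R = {} \<and> card A = 2 * card R"
proof -
  obtain f :: "'a \<Rightarrow> nat" where f: "inj_on f A"
    using finite_imp_inj_to_nat_seg[OF fin] by blast
  define R where "R = {x \<in> A. f x < f (\<tau> x)}"
  have "R \<subseteq> A" by (auto simp: R_def)
  have disjoint: "R \<inter> \<tau> ` R = {}"
    using invol by (auto simp: R_def)
  have "x \<in> R \<union> \<tau> ` R" if x: "x \<in> A" for x
  proof (cases "f x < f (\<tau> x)")
    case True
    then show ?thesis using x by (simp add: R_def)
  next
    case False
    moreover have "f x \<noteq> f (\<tau> x)"
      using inj_onD[OF f _ x invol(1)[OF x]] no_fix[OF x] by metis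
    ultimately have "\<tau> x \<in> R" using x invol by (simp add: R_def)
    then have "\<tau> (\<tau> x) \<in> \<tau> ` R" by blast
    then show ?thesis using invol(2)[OF x] by simp
  qed
  then have A: "A = R \<union> \<tau> ` R"
    using \<open>R \<subseteq> A\<close> invol(1) by blast
  have "inj_on \<tau> R"
    by (rule inj_on_inverseI[where g = \<tau>]) (use invol(2) \<open>R \<subseteq> A\<close> in blast)
  moreover have "finite R" using finite_subset[OF \<open>R \<subseteq> A\<close> fin] .
  ultimately have "card A = card R + card R"
    unfolding A using disjoint by (simp add: card_Un_disjoint card_image)
  with \<open>R \<subseteq> A\<close> disjoint show ?thesis
    by (intro exI[of _ R]) simp
qed

lemma (in comm_group) ex_reflection_transversal:
  assumes fin: "finite (carrier G)" and even: "even (order G)"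
  shows "\<exists>w\<in>carrier G. \<exists>R\<subseteq>carrier G. R \<inter> (\<lambda>y. w \<otimes> inv y) ` R = {} \<and> order G = 2 * card R"
proof -
  obtain w where w: "w \<in> carrier G" "\<forall>y\<in>carrier G. y \<otimes> y \<noteq> w"
    using ex_nonsquare_if_even_order[OF fin even] by blast
  have "\<exists>R\<subseteq>carrier G. R \<inter> (\<lambda>y. w \<otimes> inv y) ` R = {} \<and> card (carrier G) = 2 * card R"
  proof (rule fixed_point_free_involution_halves[OF fin])
    fix y
    assume y: "y \<in> carrier G"
    show "w \<otimes> inv y \<in> carrier G" using w(1) y by simp
    show "w \<otimes> inv (w \<otimes> inv y) = y" using w(1) y by (simp add: inv_mult flip: m_assoc)
    show "w \<otimes> inv y \<noteq> y"
    proof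
      assume "w \<otimes> inv y = y"
      then have "w = y \<otimes> y" using w(1) y by (metis inv_solve_right)
      with w(2) y show False by blast
    qed
  qed
  then show ?thesis using w(1) unfolding order_def by blast
qed

lemma (in normal) r_coset_group_hom_Mod: "group_hom G (G Mod H) ((#>) H)"
  by (simp add: group_hom_def group_hom_axioms_def is_group factorgroup_is_group r_coset_hom_Mod)

subsection \<open>Necessity\<close>

lemma MRS_entry_in_carrier:
  assumes "MRS G m n s k c A" "t < c" "i < m" "j < n" "A t i j \<noteq> None"
  shows "the (A t i j) \<in> carrier G"
proof -
  have "bij_betw (\<lambda>(t, i, j). the (A t i j)) (filled_cells m n c A) (carrier G)"
    using assms(1) unfolding MRS_def by (elim conjE)
  then show ?thesis using assms(2-5) by (force simp: filled_cells_def dest: bij_betwE)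
qed

lemma MRS_entry_inj:
  assumes "MRS G m n s k c A"
    and "t < c" "i < m" "j < n" "A t i j \<noteq> None"
    and "t' < c" "i' < m" "j' < n" "A t' i' j' \<noteq> None"
    and "the (A t i j) = the (A t' i' j')"
  shows "(t, i, j) = (t', i', j')"
proof -
  have inj: "inj_on (\<lambda>(t, i, j). the (A t i j)) (filled_cells m n c A)"
    using assms(1) unfolding MRS_def bij_betw_def by (elim conjE)
  show ?thesis
  proof (rule inj_onD[OF inj])
    show "(\<lambda>(t, i, j). the (A t i j)) (t, i, j) = (\<lambda>(t, i, j). the (A t i j)) (t', i', j')"
      using assms(10) by simp
    show "(t, i, j) \<in> filled_cells m n c A" "(t', i', j') \<in> filled_cells m n c A"
      using assms(2-9) by (simp_all add: filled_cells_def)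
  qed
qed

lemma (in comm_monoid) MRS_2_pair_products:
  assumes M: "MRS G m n 2 2 c A"
  obtains \<omega> \<delta> where
    "\<And>t i j j'. t < c \<Longrightarrow> i < m \<Longrightarrow> j < n \<Longrightarrow> j' < n \<Longrightarrow> j \<noteq> j' \<Longrightarrow>
      A t i j \<noteq> None \<Longrightarrow> A t i j' \<noteq> None \<Longrightarrow> the (A t i j) \<otimes> the (A t i j') = \<omega>"
    and "\<And>t i i' j. t < c \<Longrightarrow> i < m \<Longrightarrow> i' < m \<Longrightarrow> j < n \<Longrightarrow> i \<noteq> i' \<Longrightarrow>
      A t i j \<noteq> None \<Longrightarrow> A t i' j \<noteq> None \<Longrightarrow> the (A t i j) \<otimes> the (A t i' j) = \<delta>"
proof -
  obtain \<omega> \<delta> where rows: "\<forall>t<c. \<forall>i<m. card {j. j < n \<and> A t i j \<noteq> None} = 2"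
    and cols: "\<forall>t<c. \<forall>j<n. card {i. i < m \<and> A t i j \<noteq> None} = 2"
    and row_prod: "\<forall>t<c. \<forall>i<m. finprod G (\<lambda>j. the (A t i j)) {j. j < n \<and> A t i j \<noteq> None} = \<omega>"
    and col_prod: "\<forall>t<c. \<forall>j<n. finprod G (\<lambda>i. the (A t i j)) {i. i < m \<and> A t i j \<noteq> None} = \<delta>"
    using M unfolding MRS_def by (elim conjE bexE)
  show thesis
  proof (rule that)
    fix t i j j'
    assume "t < c" "i < m" "j < n" "j' < n" "j \<noteq> j'" "A t i j \<noteq> None" "A t i j' \<noteq> None"
    then show "the (A t i j) \<otimes> the (A t i j') = \<omega>"
      using finprod_card_2[OF rows[rule_format, of t i], of j j' "\<lambda>j. the (A t i j)"] row_prod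
        MRS_entry_in_carrier[OF M]
      by simp
  next
    fix t i i' j
    assume "t < c" "i < m" "i' < m" "j < n" "i \<noteq> i'" "A t i j \<noteq> None" "A t i' j \<noteq> None"
    then show "the (A t i j) \<otimes> the (A t i' j) = \<delta>"
      using finprod_card_2[OF cols[rule_format, of t j], of i i' "\<lambda>i. the (A t i j)"] col_prod
        MRS_entry_in_carrier[OF M]
      by simp
  qed
qed

lemma two_diagonals_filled:
  assumes "\<forall>i<n. \<forall>j<n. A i j \<noteq> None \<longleftrightarrow> (\<exists>r<2. in_diag n (d + r) i j)" "i < n"
  shows "A i ((i + d) mod n) \<noteq> None" "A i ((i + Suc d) mod n) \<noteq> None"
proof -
  have "in_diag n (d + 0) i ((i + d) mod n)" "in_diag n (d + 1) i ((i + Suc d) mod n)"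
    using in_diag_add_mod[of n d i] in_diag_add_mod[of n "Suc d" i] by simp_all
  moreover have "(0::nat) < 2" "(1::nat) < 2" "(i + d) mod n < n" "(i + Suc d) mod n < n"
    using assms(2) by simp_all
  ultimately show "A i ((i + d) mod n) \<noteq> None" "A i ((i + Suc d) mod n) \<noteq> None"
    using assms by blast+
qed

lemma (in comm_monoid) diagonal_MRS_2_relations:
  assumes n: "1 < n" and c: "0 < c" and A: "diagonal_MRS G n 2 c A"
  obtains a b \<omega> \<delta> where "\<And>i. i < n \<Longrightarrow> a i \<in> carrier G \<and> b i \<in> carrier G"
    and "inj_on a {..<n}"
    and "\<And>i. i < n \<Longrightarrow> a i \<otimes> b i = \<omega>"
    and "\<And>i. i < n \<Longrightarrow> b i \<otimes> a (Suc i mod n) = \<delta>"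
proof -
  have M: "MRS G n n 2 2 c A"
    and "\<forall>t<c. \<exists>d<n. \<forall>i<n. \<forall>j<n. A t i j \<noteq> None \<longleftrightarrow> (\<exists>r<2. in_diag n (d + r) i j)"
    using A unfolding diagonal_MRS_def by simp_all
  then obtain d where diag: "\<forall>i<n. \<forall>j<n. A 0 i j \<noteq> None \<longleftrightarrow> (\<exists>r<2. in_diag n (d + r) i j)"
    using c by blast
  obtain \<omega> \<delta> where row: "\<And>i j j'. i < n \<Longrightarrow> j < n \<Longrightarrow> j' < n \<Longrightarrow> j \<noteq> j' \<Longrightarrow>
      A 0 i j \<noteq> None \<Longrightarrow> A 0 i j' \<noteq> None \<Longrightarrow> the (A 0 i j) \<otimes> the (A 0 i j') = \<omega>"
    and col: "\<And>i i' j. i < n \<Longrightarrow> i' < n \<Longrightarrow> j < n \<Longrightarrow> i \<noteq> i' \<Longrightarrow>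
      A 0 i j \<noteq> None \<Longrightarrow> A 0 i' j \<noteq> None \<Longrightarrow> the (A 0 i j) \<otimes> the (A 0 i' j) = \<delta>"
    using MRS_2_pair_products[OF M] c by metis
  define p where "p i = (i + d) mod n" for i
  define q where "q i = (i + Suc d) mod n" for i
  have pq: "p i < n" "q i < n" "p i \<noteq> q i" "q i = p (Suc i mod n)" for i
    using n Suc_mod_neq[OF n, of "i + d"] by (simp_all add: p_def q_def mod_add_left_eq)
  have filled: "A 0 i (p i) \<noteq> None" "A 0 i (q i) \<noteq> None" if "i < n" for i
    unfolding p_def q_def using two_diagonals_filled[OF diag that] .
  define a where "a i = the (A 0 i (p i))" for i
  define b where "b i = the (A 0 i (q i))" for i
  have "a i \<in> carrier G \<and> b i \<in> carrier G" if "i < n" for i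
    unfolding a_def b_def using MRS_entry_in_carrier[OF M c that] pq filled[OF that] by simp
  moreover have "inj_on a {..<n}"
    unfolding a_def using MRS_entry_inj[OF M c _ pq(1) filled(1) c _ pq(1) filled(1)]
    by (auto intro!: inj_onI)
  moreover have "a i \<otimes> b i = \<omega>" if "i < n" for i
    using row[OF that pq(1-3)] filled[OF that] unfolding a_def b_def .
  moreover have "b i \<otimes> a (Suc i mod n) = \<delta>" if "i < n" for i
  proof -
    have "Suc i mod n < n" "i \<noteq> Suc i mod n" using that n Suc_mod_neq_self by simp_all
    then show ?thesis
      using col[OF that _ pq(2)] filled(2)[OF that] filled(1)[of "Suc i mod n"]
      unfolding a_def b_def pq(4) by simp
  qed
  ultimately show ?thesis using that by blast
qed

lemma (in comm_group) ex_ord_if_diagonal_MRS_2: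
  assumes "1 < n" "0 < c" "diagonal_MRS G n 2 c A"
  shows "\<exists>g\<in>carrier G. ord g = n"
proof -
  obtain a b \<omega> \<delta> where ab: "\<And>i. i < n \<Longrightarrow> a i \<in> carrier G \<and> b i \<in> carrier G"
    and inj: "inj_on a {..<n}"
    and row: "\<And>i. i < n \<Longrightarrow> a i \<otimes> b i = \<omega>"
    and col: "\<And>i. i < n \<Longrightarrow> b i \<otimes> a (Suc i mod n) = \<delta>"
    using diagonal_MRS_2_relations[OF assms] by blast
  have "0 < n" using assms(1) by simp
  then have carrier: "\<omega> \<in> carrier G" "\<delta> \<in> carrier G"
    using row[of 0] col[of 0] ab[of 0] ab[of "Suc 0 mod n"] by auto
  have "a (Suc i mod n) = a i \<otimes> (inv \<omega> \<otimes> \<delta>)" if "i < n" for i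
  proof -
    have "Suc i mod n < n" using that by simp
    then have "a (Suc i mod n) = inv (b i) \<otimes> \<delta>" "b i = inv (a i) \<otimes> \<omega>"
      using ab[OF that] ab[of "Suc i mod n"] row[OF that] col[OF that] carrier by (simp_all add: inv_solve_left)
    then show ?thesis
      using ab[OF that] carrier by (simp add: inv_mult m_assoc)
  qed
  then have "ord (inv \<omega> \<otimes> \<delta>) = n"
    using ord_eq_if_cyclic_recurrence[of n "inv \<omega> \<otimes> \<delta>" a] assms(1) carrier ab inj by simp
  with carrier show ?thesis by blast
qed

subsection \<open>Arrays supported on two consecutive diagonals\<close>

definition two_diagonal_array ::
  "nat \<Rightarrow> nat \<Rightarrow> (nat \<Rightarrow> nat \<Rightarrow> 'a) \<Rightarrow> (nat \<Rightarrow> nat \<Rightarrow> 'a) \<Rightarrow> 'a arrays" where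
  "two_diagonal_array c n P Q t i j =
     (if t < c \<and> i < n \<and> j = i then Some (P t i)
      else if t < c \<and> i < n \<and> j = Suc i mod n then Some (Q t i)
      else None)"

lemma two_diagonal_array_row:
  assumes "t < c" "i < n"
  shows "{j. j < n \<and> two_diagonal_array c n P Q t i j \<noteq> None} = {i, Suc i mod n}"
  using assms by (auto simp: two_diagonal_array_def)

lemma two_diagonal_array_column:
  assumes "1 < n" "t < c" "i < n"
  shows "{k. k < n \<and> two_diagonal_array c n P Q t k (Suc i mod n) \<noteq> None} = {Suc i mod n, i}"
  using assms by (auto simp: two_diagonal_array_def mod_Suc split: if_splits)

lemma two_diagonal_array_entries:
  assumes "1 < n" "t < c" "i < n"
  shows "the (two_diagonal_array c n P Q t i i) = P t i"
    and "the (two_diagonal_array c n P Q t i (Suc i mod n)) = Q t i"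
  using assms Suc_mod_neq_self[of n i] by (auto simp: two_diagonal_array_def)

lemma two_diagonal_array_diagonals:
  assumes "1 < n"
  shows "\<forall>t<c. \<exists>d<n. \<forall>i<n. \<forall>j<n.
           two_diagonal_array c n P Q t i j \<noteq> None \<longleftrightarrow> (\<exists>r<2. in_diag n (d + r) i j)"
proof (intro allI impI)
  fix t
  assume "t < c"
  then show "\<exists>d<n. \<forall>i<n. \<forall>j<n.
      two_diagonal_array c n P Q t i j \<noteq> None \<longleftrightarrow> (\<exists>r<2. in_diag n (d + r) i j)"
    using assms by (intro exI[of _ 0])
      (simp add: two_diagonal_array_def numeral_2_eq_2 Ex_less_Suc2 in_diag_iff mod_Suc_eq)
qed

lemma filled_cells_two_diagonal_array:
  assumes "1 < n"
  shows "bij_betw (\<lambda>(t, i, b). (t, i, if b then i else Suc i mod n)) ({..<c} \<times> {..<n} \<times> UNIV)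
           (filled_cells n n c (two_diagonal_array c n P Q))"
  unfolding bij_betw_def
proof
  show "inj_on (\<lambda>(t, i, b). (t, i, if b then i else Suc i mod n)) ({..<c} \<times> {..<n} \<times> UNIV)"
    using assms by (auto simp: inj_on_def Suc_mod_neq_self split: if_splits)
  show "(\<lambda>(t, i, b). (t, i, if b then i else Suc i mod n)) ` ({..<c} \<times> {..<n} \<times> UNIV) =
      filled_cells n n c (two_diagonal_array c n P Q)"
    using assms
    by (auto simp: filled_cells_def two_diagonal_array_def image_iff split: if_splits)
qed

lemma two_diagonal_array_entries_bij:
  assumes "1 < n"
    and "bij_betw (\<lambda>(t, i, b). if b then P t i else Q t i) ({..<c} \<times> {..<n} \<times> UNIV) S"
  shows "bij_betw (\<lambda>(t, i, j). the (two_diagonal_array c n P Q t i j))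
           (filled_cells n n c (two_diagonal_array c n P Q)) S"
proof -
  have "bij_betw ((\<lambda>(t, i, j). the (two_diagonal_array c n P Q t i j)) \<circ>
      (\<lambda>(t, i, b). (t, i, if b then i else Suc i mod n))) ({..<c} \<times> {..<n} \<times> UNIV) S"
    using assms(2) by (rule bij_betw_cong[THEN iffD1, rotated])
      (auto simp: two_diagonal_array_entries[OF assms(1)])
  then show ?thesis
    using bij_betw_comp_iff[OF filled_cells_two_diagonal_array[OF assms(1)]] by blast
qed

lemma (in comm_monoid) two_diagonal_array_row_prod:
  assumes "1 < n" "t < c" "i < n" "P t i \<in> carrier G" "Q t i \<in> carrier G"
  shows "finprod G (\<lambda>j. the (two_diagonal_array c n P Q t i j))
           {j. j < n \<and> two_diagonal_array c n P Q t i j \<noteq> None} = P t i \<otimes> Q t i"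
  unfolding two_diagonal_array_row[OF assms(2,3)]
  using assms Suc_mod_neq_self[OF assms(1,3)] by (simp add: finprod_pair two_diagonal_array_entries)

lemma (in comm_monoid) two_diagonal_array_column_prod:
  assumes n: "1 < n" and t: "t < c" and i: "i < n"
    and "P t (Suc i mod n) \<in> carrier G" "Q t i \<in> carrier G"
  shows "finprod G (\<lambda>k. the (two_diagonal_array c n P Q t k (Suc i mod n)))
           {k. k < n \<and> two_diagonal_array c n P Q t k (Suc i mod n) \<noteq> None} = P t (Suc i mod n) \<otimes> Q t i"
proof -
  have "the (two_diagonal_array c n P Q t (Suc i mod n) (Suc i mod n)) = P t (Suc i mod n)"
    using two_diagonal_array_entries(1)[OF n t, of "Suc i mod n"] i by simp
  moreover have "the (two_diagonal_array c n P Q t i (Suc i mod n)) = Q t i"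
    using two_diagonal_array_entries(2)[OF n t i] .
  ultimately show ?thesis
    unfolding two_diagonal_array_column[OF n t i]
    using finprod_pair[of "Suc i mod n" i "\<lambda>k. the (two_diagonal_array c n P Q t k (Suc i mod n))"]
      assms(4,5) Suc_mod_neq_self[OF n i]
    by simp
qed

lemma (in comm_monoid) MRS_two_diagonal_array:
  assumes n: "1 < n"
    and bij: "bij_betw (\<lambda>(t, i, b). if b then P t i else Q t i) ({..<c} \<times> {..<n} \<times> UNIV) (carrier G)"
    and \<omega>: "\<omega> \<in> carrier G" "\<And>t i. t < c \<Longrightarrow> i < n \<Longrightarrow> P t i \<otimes> Q t i = \<omega>"
    and \<delta>: "\<delta> \<in> carrier G" "\<And>t i. t < c \<Longrightarrow> i < n \<Longrightarrow> P t (Suc i mod n) \<otimes> Q t i = \<delta>"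
  shows "MRS G n n 2 2 c (two_diagonal_array c n P Q)"
proof -
  let ?A = "two_diagonal_array c n P Q"
  have PQ: "P t i \<in> carrier G" "Q t i \<in> carrier G" if "t < c" "i < n" for t i
    using bspec[OF bij_betwE[OF bij], of "(t, i, True)"] bspec[OF bij_betwE[OF bij], of "(t, i, False)"] that
    by auto
  have rows: "card {j. j < n \<and> ?A t i j \<noteq> None} = 2 \<and>
      finprod G (\<lambda>j. the (?A t i j)) {j. j < n \<and> ?A t i j \<noteq> None} = \<omega>"
    if "t < c" "i < n" for t i
    using two_diagonal_array_row[where P = P and Q = Q, OF that] Suc_mod_neq_self[OF n that(2)]
      two_diagonal_array_row_prod[where P = P and Q = Q, OF n that PQ[OF that]] \<omega>(2)[OF that]
    by simp
  have columns: "card {i. i < n \<and> ?A t i j \<noteq> None} = 2 \<and>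
      finprod G (\<lambda>i. the (?A t i j)) {i. i < n \<and> ?A t i j \<noteq> None} = \<delta>"
    if t: "t < c" and j: "j < n" for t j
  proof -
    obtain i where i: "i < n" "j = Suc i mod n"
      using ex_Suc_mod_eq[OF j] by blast
    then show ?thesis
      using two_diagonal_array_column[where P = P and Q = Q, OF n t i(1)] Suc_mod_neq_self[OF n i(1)]
        two_diagonal_array_column_prod[where P = P and Q = Q, OF n t i(1) PQ(1)[OF t j[unfolded i(2)]]
          PQ(2)[OF t i(1)]] \<delta>(2)[OF t i(1)]
      by simp
  qed
  show ?thesis
    unfolding MRS_def
  proof (intro conjI)
    show "card (carrier G) = n * 2 * c"
      using bij_betw_same_card[OF bij] by (simp add: card_cartesian_product mult_ac)
    show "bij_betw (\<lambda>(t, i, j). the (?A t i j)) (filled_cells n n c ?A) (carrier G)"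
      using two_diagonal_array_entries_bij[OF n bij] .
    show "\<forall>t<c. \<forall>i<n. card {j. j < n \<and> ?A t i j \<noteq> None} = 2"
      using rows by simp
    show "\<forall>t<c. \<forall>j<n. card {i. i < n \<and> ?A t i j \<noteq> None} = 2"
      using columns by simp
    have "\<forall>t<c. \<forall>i<n. finprod G (\<lambda>j. the (?A t i j)) {j. j < n \<and> ?A t i j \<noteq> None} = \<omega>"
      "\<forall>t<c. \<forall>j<n. finprod G (\<lambda>i. the (?A t i j)) {i. i < n \<and> ?A t i j \<noteq> None} = \<delta>"
      using rows columns by simp_all
    with \<omega>(1) \<delta>(1) show "\<exists>\<omega>\<in>carrier G. \<exists>\<delta>\<in>carrier G.
        (\<forall>t<c. \<forall>i<n. finprod G (\<lambda>j. the (?A t i j)) {j. j < n \<and> ?A t i j \<noteq> None} = \<omega>) \<and>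
        (\<forall>t<c. \<forall>j<n. finprod G (\<lambda>i. the (?A t i j)) {i. i < n \<and> ?A t i j \<noteq> None} = \<delta>)"
      by blast
  qed
qed

subsection \<open>Sufficiency\<close>

lemma (in group) ex_coset_representatives:
  assumes "finite R" "R \<subseteq> rcosets H"
  obtains r where "\<And>t. t < card R \<Longrightarrow> r t \<in> carrier G" "bij_betw (\<lambda>t. H #> r t) {..<card R} R"
proof -
  obtain e where e: "bij_betw e {..<card R} R"
    using ex_bij_betw_nat_finite[OF assms(1)] by (auto simp: atLeast0LessThan)
  have "\<forall>t\<in>{..<card R}. \<exists>a. a \<in> carrier G \<and> H #> a = e t"
  proof
    fix t
    assume "t \<in> {..<card R}"
    then have "e t \<in> rcosets H" using bij_betwE[OF e] assms(2) by blast
    then show "\<exists>a. a \<in> carrier G \<and> H #> a = e t" unfolding RCOSETS_def by blast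
  qed
  from bchoice[OF this] obtain r where r: "\<forall>t\<in>{..<card R}. r t \<in> carrier G \<and> H #> r t = e t"
    by blast
  show thesis
  proof (rule that)
    show "r t \<in> carrier G" if "t < card R" for t using r that by simp
    show "bij_betw (\<lambda>t. H #> r t) {..<card R} R"
      using bij_betw_cong[of "{..<card R}" "\<lambda>t. H #> r t" e R] e r by simp
  qed
qed

lemma (in comm_group) ex_reflected_coset_representatives:
  assumes fin: "finite (carrier G)" and H: "subgroup H G" and index: "card (rcosets H) = 2 * c"
  obtains w r where "w \<in> carrier G" "\<And>t. t < c \<Longrightarrow> r t \<in> carrier G"
    and "inj_on (\<lambda>t. H #> r t) {..<c}"
    and "\<And>t s. t < c \<Longrightarrow> s < c \<Longrightarrow> H #> r t \<noteq> H #> (w \<otimes> inv (r s))"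
proof -
  interpret Q: comm_group "G Mod H" using abelian_FactGroup[OF H] .
  interpret \<pi>: group_hom G "G Mod H" "(#>) H"
    using normal.r_coset_group_hom_Mod[OF subgroup_imp_normal[OF H]] .
  have fin_Q: "finite (carrier (G Mod H))" using fin by (simp add: carrier_FactGroup)
  moreover have "even (order (G Mod H))" using index by (simp add: order_def FactGroup_def)
  ultimately obtain W R where W: "W \<in> carrier (G Mod H)" and R: "R \<subseteq> carrier (G Mod H)"
    "R \<inter> (\<lambda>Y. W \<otimes>\<^bsub>G Mod H\<^esub> inv\<^bsub>G Mod H\<^esub> Y) ` R = {}" "order (G Mod H) = 2 * card R"
    using Q.ex_reflection_transversal by blast
  have "finite R" "R \<subseteq> rcosets H"
    using finite_subset[OF R(1) fin_Q] R(1) by (simp_all add: FactGroup_def)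
  then obtain r where r_R: "\<And>t. t < card R \<Longrightarrow> r t \<in> carrier G" "bij_betw (\<lambda>t. H #> r t) {..<card R} R"
    by (rule ex_coset_representatives) blast
  moreover have "card R = c" using R(3) index by (simp add: order_def FactGroup_def)
  ultimately have r: "\<And>t. t < c \<Longrightarrow> r t \<in> carrier G" "bij_betw (\<lambda>t. H #> r t) {..<c} R"
    by simp_all
  obtain w where w: "w \<in> carrier G" "H #> w = W"
    using W by (auto simp: carrier_FactGroup)
  show thesis
  proof (rule that)
    show "w \<in> carrier G" "\<And>t. t < c \<Longrightarrow> r t \<in> carrier G" using w r(1) by simp_all
    show "inj_on (\<lambda>t. H #> r t) {..<c}" using bij_betw_imp_inj_on[OF r(2)] .
    fix t s
    assume "t < c" "s < c"
    then have "H #> r t \<in> R" "H #> r s \<in> R" using bij_betwE[OF r(2)] by auto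
    moreover have "H #> (w \<otimes> inv (r s)) = W \<otimes>\<^bsub>G Mod H\<^esub> inv\<^bsub>G Mod H\<^esub> (H #> r s)"
      using w r(1)[OF \<open>s < c\<close>] by (simp add: \<pi>.hom_mult \<pi>.hom_inv)
    ultimately show "H #> r t \<noteq> H #> (w \<otimes> inv (r s))" using R(2) by blast
  qed
qed

lemma (in comm_group) inj_on_reflected_sheets:
  assumes H: "subgroup H G"
    and x: "x \<in> carrier G" "ord x = n" "\<And>i::nat. x [^] i \<in> H"
    and r: "\<And>t. t < c \<Longrightarrow> r t \<in> carrier G" "inj_on (\<lambda>t. H #> r t) {..<c}"
    and w: "w \<in> carrier G" "\<And>t s. t < c \<Longrightarrow> s < c \<Longrightarrow> H #> r t \<noteq> H #> (w \<otimes> inv (r s))"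
  shows "inj_on (\<lambda>(t, i, b). if b then r t \<otimes> x [^] i else w \<otimes> inv (r t \<otimes> x [^] i))
           ({..<c} \<times> {..<n} \<times> UNIV)"
proof -
  let ?P = "\<lambda>t (i::nat). r t \<otimes> x [^] i"
  have P: "?P t i \<in> carrier G" if "t < c" for t i using r(1)[OF that] x(1) by simp
  have coset_P: "H #> ?P t i = H #> r t" if "t < c" for t i
    using r_coset_mult_mem[OF H r(1)[OF that] x(3)] .
  have coset_Q: "H #> (w \<otimes> inv (?P t i)) = H #> (w \<otimes> inv (r t))" if "t < c" for t i
    using r_coset_mult_mem[OF H _ subgroup.m_inv_closed[OF H x(3)], of "w \<otimes> inv (r t)" i]
      w(1) r(1)[OF that] x(1) by (simp add: inv_mult m_ac)
  have P_inj: "t = s \<and> i = k" if "t < c" "s < c" "i < n" "k < n" "?P t i = ?P s k" for t s i k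
  proof -
    have "t = s" using coset_P that r(2) by (metis inj_onD lessThan_iff)
    then have "x [^] i = x [^] k" using that(5) r(1)[OF that(1)] x(1) by (metis l_cancel nat_pow_closed)
    then have "i = k" using ord_inj[OF x(1)] that(3,4) x(2) by (auto dest: inj_onD)
    with \<open>t = s\<close> show ?thesis ..
  qed
  have PQ_distinct: "?P t i \<noteq> w \<otimes> inv (?P s k)" if "t < c" "s < c" for t s i k
  proof
    assume "?P t i = w \<otimes> inv (?P s k)"
    then have "H #> r t = H #> (w \<otimes> inv (r s))" using coset_P coset_Q that by metis
    with w(2) that show False by blast
  qed
  have Q_inj: "?P t i = ?P s k" if "t < c" "s < c" "w \<otimes> inv (?P t i) = w \<otimes> inv (?P s k)" for t s i k
    using that w(1) P by (metis inv_closed inv_inv l_cancel)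
  show ?thesis
  proof (rule inj_onI)
    fix u v
    assume uv: "u \<in> {..<c} \<times> {..<n} \<times> UNIV" "v \<in> {..<c} \<times> {..<n} \<times> UNIV"
      "(\<lambda>(t, i, b). if b then ?P t i else w \<otimes> inv (?P t i)) u =
       (\<lambda>(t, i, b). if b then ?P t i else w \<otimes> inv (?P t i)) v"
    obtain t i b s k b' where u: "u = (t, i, b)" and v: "v = (s, k, b')" by (metis prod_cases3)
    show "u = v"
      using uv P_inj[of t s i k] Q_inj[of t s i k] PQ_distinct[of t s i k] PQ_distinct[of s t k i]
      unfolding u v by (cases b; cases b') auto
  qed
qed

lemma (in comm_group) diagonal_MRS_2_if_ord:
  assumes fin: "finite (carrier G)" and n: "1 < n" and order: "order G = 2 * n * c"
    and x: "x \<in> carrier G" "ord x = n"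
  shows "\<exists>A. diagonal_MRS G n 2 c A"
proof -
  define H where "H = generate G {x}"
  have H: "subgroup H G" unfolding H_def using generate_is_subgroup x(1) by simp
  have xH: "x [^] i \<in> H" for i :: nat
    unfolding H_def generate_pow[OF x(1)] by (metis (mono_tags) int_pow_int mem_Collect_eq UNIV_I)
  have "card (rcosets H) * n = 2 * c * n"
    using lagrange[OF H] generate_pow_card[OF x(1)] x(2) order by (simp add: H_def mult_ac)
  then have "card (rcosets H) = 2 * c" using n by simp
  then obtain w r where w: "w \<in> carrier G" and r: "\<And>t. t < c \<Longrightarrow> r t \<in> carrier G"
    "inj_on (\<lambda>t. H #> r t) {..<c}" "\<And>t s. t < c \<Longrightarrow> s < c \<Longrightarrow> H #> r t \<noteq> H #> (w \<otimes> inv (r s))"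
    using ex_reflected_coset_representatives[OF fin H] by metis
  have bij: "bij_betw (\<lambda>(t, i, b). if b then r t \<otimes> x [^] i else w \<otimes> inv (r t \<otimes> x [^] i))
      ({..<c} \<times> {..<n} \<times> UNIV) (carrier G)"
    using inj_on_reflected_sheets[OF H x xH r(1,2) w r(3)] fin r(1) x(1) w order
    by (intro bij_betw_if_inj_on_card_eq) (auto simp: card_cartesian_product order_def)
  have rows: "r t \<otimes> x [^] i \<otimes> (w \<otimes> inv (r t \<otimes> x [^] i)) = w" if "t < c" "i < n" for t i
    using mult_mult_inv_cancel(1) r(1)[OF that(1)] x(1) w by simp
  have columns: "r t \<otimes> x [^] (Suc i mod n) \<otimes> (w \<otimes> inv (r t \<otimes> x [^] i)) = w \<otimes> x"
    if "t < c" "i < n" for t i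
  proof -
    have "r t \<otimes> x [^] (Suc i mod n) = r t \<otimes> x [^] i \<otimes> x"
      using pow_mod_ord[OF x(1), of "Suc i"] x r(1)[OF that(1)] by (simp add: m_assoc)
    then show ?thesis using mult_mult_inv_cancel(2) r(1)[OF that(1)] x(1) w by simp
  qed
  show ?thesis
    using MRS_two_diagonal_array[OF n bij w rows m_closed[OF w x(1)] columns]
      two_diagonal_array_diagonals[OF n]
    unfolding diagonal_MRS_def by blast
qed

theorem theorem5p5:
  fixes G :: "('a, 'b) monoid_scheme" and n c :: nat
  assumes "n \<ge> 2" and "c \<ge> 1"
    and "comm_group G" and "finite (carrier G)"
    and "order G = 2 * n * c"
  shows "(\<exists>A. diagonal_MRS G n 2 c A) \<longleftrightarrow> (\<exists>x\<in>carrier G. group.ord G x = n)"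
proof -
  interpret comm_group G by fact
  have "1 < n" "0 < c" using assms(1,2) by simp_all
  then show ?thesis
    using ex_ord_if_diagonal_MRS_2 diagonal_MRS_2_if_ord[OF assms(4) \<open>1 < n\<close> assms(5)] by blast
qed

end
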